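(* Let $\mathcal{M}=(W,E,V)$ be a coalition model in which $E_w$ satisfies $\alpha$-duality for every $w\in W$. For $w\in W$, $C\subseteq N$, $\varphi\in\mathcal{L}_{CL}$, let $\mathrm{cat}_w(C,\varphi)\in\{\mathrm{FC},\mathrm{PD},\mathrm{AD},\mathrm{FI}\}$ be the unique category $X$ such that $\mathcal{M},w\models X_C(\varphi)$. Let $\sigma_{\mathrm{neg}}$ be the permutation of $\{\mathrm{FC},\mathrm{PD},\mathrm{AD},\mathrm{FI}\}$ fixing $\mathrm{FC},\mathrm{FI}$ and swapping $\mathrm{PD},\mathrm{AD}$; let $\sigma_{\mathrm{comp}}$ fix $\mathrm{PD},\mathrm{AD}$ and swap $\mathrm{FC},\mathrm{FI}$; let $\sigma_{\mathrm{both}}=\sigma_{\mathrm{neg}}\circ\sigma_{\mathrm{comp}}$. Then for all $w,C,\varphi$: $\mathrm{cat}_w(C,\neg\varphi)=\sigma_{\mathrm{neg}}(\mathrm{cat}_w(C,\varphi))$, $\mathrm{cat}_w(N\setminus C,\varphi)=\sigma_{\mathrm{comp}}(\mathrm{cat}_w(C,\varphi))$, and $\mathrm{cat}_w(N\setminus C,\neg\varphi)=\sigma_{\mathrm{both}}(\mathrm{cat}_w(C,\varphi))$. Thus the transformations $(C,\varphi)\mapsto(C,\neg\varphi)$, $(C,\varphi)\mapsto(N\setminus C,\varphi)$, their composite, and the identity induce the permutations $\sigma_{\mathrm{neg}},\sigma_{\mathrm{comp}},\sigma_{\mathrm{both}},\mathrm{id}$ of the four categories, and these four permutations form a group under composition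 isomorphic to the Klein four-group $V_4\cong\mathbb{Z}_2\times\mathbb{Z}_2$.
   Context: Let $N=\{1,\dots,n\}$ be a finite set of agents and $\mathrm{Prop}$ a countable set of atoms. The language $\mathcal{L}_{CL}$ is $\varphi ::= p \mid \neg\varphi \mid (\varphi\wedge\psi)\mid [C]\varphi$ ($p\in\mathrm{Prop}$, $C\subseteq N$). A coalition model is $\mathcal{M}=(W,E,V)$, $W$ nonempty, $E_w(C)\subseteq\mathcal{P}(W)$ for $w\in W$, $C\subseteq N$, $V:\mathrm{Prop}\to\mathcal{P}(W)$; satisfaction is classical for Boolean parts and $\mathcal{M},w\models[C]\varphi$ iff $[\![\varphi]\!]_{\mathcal{M}}=\{u\mid\mathcal{M},u\models\varphi\}\in E_w(C)$. $E_w$ satisfies $\alpha$-duality if for all $C\subseteq N$, $X\subseteq W$: $X\in E_w(C)$ iff $W\setminus X\notin E_w(N\setminus C)$. Categories: $\mathrm{FC}_C(\varphi)=[C]\varphi\wedge[C]\neg\varphi$, $\mathrm{PD}_C(\varphi)=[C]\varphi\wedge\neg[C]\neg\varphi$, $\mathrm{AD}_C(\varphi)=\neg[C]\varphi\wedge[C]\neg\varphi$, $\mathrm{FI}_C(\varphi)=\neg[C]\varphi\wedge\neg[C]\neg\varphi$; exactly one of these holds at each state. *)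

theory Defs
  imports Main "HOL-Algebra.Elementary_Groups"
begin

(* Agents are natural numbers; the set of agents is N = {1..n}. Atoms have type 'p. *)
datatype 'p fm = Atom 'p | Neg "'p fm" | Conj "'p fm" "'p fm" | Coal "nat set" "'p fm"

definition coalition_model :: "nat \<Rightarrow> 'w set \<Rightarrow> ('w \<Rightarrow> nat set \<Rightarrow> 'w set set) \<Rightarrow> ('p \<Rightarrow> 'w set) \<Rightarrow> bool" where
  "coalition_model n W E V \<longleftrightarrow> W \<noteq> {} \<and>
     (\<forall>w\<in>W. \<forall>C. C \<subseteq> {1..n} \<longrightarrow> E w C \<subseteq> Pow W) \<and> (\<forall>p. V p \<subseteq> W)"

fun sat :: "'w set \<Rightarrow> ('w \<Rightarrow> nat set \<Rightarrow> 'w set set) \<Rightarrow> ('p \<Rightarrow> 'w set) \<Rightarrow> 'w \<Rightarrow> 'p fm \<Rightarrow> bool" where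
  "sat W E V w (Atom p) = (w \<in> V p)"
| "sat W E V w (Neg f) = (\<not> sat W E V w f)"
| "sat W E V w (Conj f g) = (sat W E V w f \<and> sat W E V w g)"
| "sat W E V w (Coal C f) = ({u \<in> W. sat W E V u f} \<in> E w C)"

definition alpha_duality :: "nat \<Rightarrow> 'w set \<Rightarrow> ('w \<Rightarrow> nat set \<Rightarrow> 'w set set) \<Rightarrow> 'w \<Rightarrow> bool" where
  "alpha_duality n W E w \<longleftrightarrow>
     (\<forall>C X. C \<subseteq> {1..n} \<longrightarrow> X \<subseteq> W \<longrightarrow> (X \<in> E w C \<longleftrightarrow> W - X \<notin> E w ({1..n} - C)))"

datatype category = FC | PD | AD | FI

fun cat_fm :: "category \<Rightarrow> nat set \<Rightarrow> 'p fm \<Rightarrow> 'p fm" where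
  "cat_fm FC C f = Conj (Coal C f) (Coal C (Neg f))"
| "cat_fm PD C f = Conj (Coal C f) (Neg (Coal C (Neg f)))"
| "cat_fm AD C f = Conj (Neg (Coal C f)) (Coal C (Neg f))"
| "cat_fm FI C f = Conj (Neg (Coal C f)) (Neg (Coal C (Neg f)))"

definition cat :: "'w set \<Rightarrow> ('w \<Rightarrow> nat set \<Rightarrow> 'w set set) \<Rightarrow> ('p \<Rightarrow> 'w set) \<Rightarrow> 'w \<Rightarrow> nat set \<Rightarrow> 'p fm \<Rightarrow> category" where
  "cat W E V w C f = (THE X. sat W E V w (cat_fm X C f))"

fun sigma_neg :: "category \<Rightarrow> category" where
  "sigma_neg FC = FC" | "sigma_neg PD = AD" | "sigma_neg AD = PD" | "sigma_neg FI = FI"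

fun sigma_comp :: "category \<Rightarrow> category" where
  "sigma_comp FC = FI" | "sigma_comp PD = PD" | "sigma_comp AD = AD" | "sigma_comp FI = FC"

definition sigma_both :: "category \<Rightarrow> category" where
  "sigma_both = sigma_neg \<circ> sigma_comp"

definition perm_group :: "(category \<Rightarrow> category) monoid" where
  "perm_group = \<lparr>carrier = {id, sigma_neg, sigma_comp, sigma_both}, monoid.mult = (\<circ>), one = id\<rparr>"

end

theory Submission
  imports Defs
begin

(* The category of C and f at w is determined by the two truth values of [C]f and [C]~f.
   Negating f swaps them, since ~~f has the same truth set as f.  By alpha-duality,
   [N-C]f holds iff [C]~f fails, so passing to the complementary coalition swaps and
   negates them.  The four induced permutations are involutions that commute, and
   recording which of PD and FC a permutation moves identifies them with Z2 x Z2. *)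

definition category_of :: "bool \<Rightarrow> bool \<Rightarrow> category" where
  "category_of a b = (if a then (if b then FC else PD) else (if b then AD else FI))"

lemma sat_cat_fm_iff:
  "sat W E V w (cat_fm X C f) \<longleftrightarrow>
     X = category_of (sat W E V w (Coal C f)) (sat W E V w (Coal C (Neg f)))"
  by (cases X) (auto simp: category_of_def simp del: sat.simps(4))

lemma cat_eq_category_of:
  "cat W E V w C f = category_of (sat W E V w (Coal C f)) (sat W E V w (Coal C (Neg f)))"
  unfolding cat_def sat_cat_fm_iff by simp

lemma sigma_neg_category_of: "sigma_neg (category_of a b) = category_of b a"
  by (simp add: category_of_def)

lemma sigma_comp_category_of: "sigma_comp (category_of a b) = category_of (\<not> b) (\<not> a)"
  by (simp add: category_of_def)

lemma sat_Coal_Neg_Neg: "sat W E V w (Coal C (Neg (Neg f))) \<longleftrightarrow> sat W E V w (Coal C f)"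
  by simp

lemma cat_Neg: "cat W E V w C (Neg f) = sigma_neg (cat W E V w C f)"
  by (simp only: cat_eq_category_of sat_Coal_Neg_Neg sigma_neg_category_of)

lemma alpha_duality_sat_Coal_complement:
  assumes "alpha_duality n W E w" and "C \<subseteq> {1..n}"
  shows "sat W E V w (Coal ({1..n} - C) f) \<longleftrightarrow> \<not> sat W E V w (Coal C (Neg f))"
proof -
  let ?X = "{u \<in> W. sat W E V u f}"
  have "W - ?X \<in> E w C \<longleftrightarrow> W - (W - ?X) \<notin> E w ({1..n} - C)"
    using assms unfolding alpha_duality_def by blast
  moreover have "W - (W - ?X) = ?X" and "{u \<in> W. \<not> sat W E V u f} = W - ?X"
    by auto
  ultimately show ?thesis
    by simp
qed

lemma cat_complement:
  assumes "alpha_duality n W E w" and "C \<subseteq> {1..n}"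
  shows "cat W E V w ({1..n} - C) f = sigma_comp (cat W E V w C f)"
  by (simp only: cat_eq_category_of sigma_comp_category_of sat_Coal_Neg_Neg
      alpha_duality_sat_Coal_complement[OF assms])

lemma cat_complement_Neg:
  assumes "alpha_duality n W E w" and "C \<subseteq> {1..n}"
  shows "cat W E V w ({1..n} - C) (Neg f) = sigma_both (cat W E V w C f)"
  by (simp only: cat_Neg cat_complement[OF assms] sigma_both_def comp_apply)

lemma group_of_involutions:
  assumes "id \<in> S" and "\<And>g h. g \<in> S \<Longrightarrow> h \<in> S \<Longrightarrow> g \<circ> h \<in> S"
    and "\<And>g. g \<in> S \<Longrightarrow> g \<circ> g = id"
  shows "group \<lparr>carrier = S, monoid.mult = (\<circ>), one = id\<rparr>"
  by (rule groupI) (use assms in \<open>auto simp: comp_assoc\<close>)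

lemma sigma_neg_sigma_neg [simp]: "sigma_neg (sigma_neg x) = x"
  by (cases x) simp_all

lemma sigma_comp_sigma_comp [simp]: "sigma_comp (sigma_comp x) = x"
  by (cases x) simp_all

lemma sigma_comp_sigma_neg_commute: "sigma_comp (sigma_neg x) = sigma_neg (sigma_comp x)"
  by (cases x) simp_all

lemma sigma_mult_table:
  "sigma_neg \<circ> sigma_neg = id" "sigma_neg \<circ> sigma_comp = sigma_both"
  "sigma_neg \<circ> sigma_both = sigma_comp" "sigma_comp \<circ> sigma_neg = sigma_both"
  "sigma_comp \<circ> sigma_comp = id" "sigma_comp \<circ> sigma_both = sigma_neg"
  "sigma_both \<circ> sigma_neg = sigma_comp" "sigma_both \<circ> sigma_comp = sigma_neg"
  "sigma_both \<circ> sigma_both = id"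
  by (simp_all add: fun_eq_iff sigma_both_def sigma_comp_sigma_neg_commute)

lemma group_perm_group: "group perm_group"
  unfolding perm_group_def
proof (rule group_of_involutions)
  let ?S = "{id, sigma_neg, sigma_comp, sigma_both}"
  show "g \<circ> h \<in> ?S" if "g \<in> ?S" and "h \<in> ?S" for g h
    using that by (elim insertE emptyE) (simp_all add: sigma_mult_table)
  show "g \<circ> g = id" if "g \<in> ?S" for g
    using that by (elim insertE emptyE) (simp_all add: sigma_mult_table)
qed simp

definition klein_coords :: "(category \<Rightarrow> category) \<Rightarrow> int \<times> int" where
  "klein_coords g = (of_bool (g PD \<noteq> PD), of_bool (g FC \<noteq> FC))"

lemma klein_coords_simps:
  "klein_coords id = (0, 0)" "klein_coords sigma_neg = (1, 0)"
  "klein_coords sigma_comp = (0, 1)" "klein_coords sigma_both = (1, 1)"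
  by (simp_all add: klein_coords_def sigma_both_def)

lemma klein_coords_iso:
  "klein_coords \<in> iso perm_group (integer_mod_group 2 \<times>\<times> integer_mod_group 2)"
proof -
  have carrier_Z2: "carrier (integer_mod_group 2) = {0, 1}"
    by (auto simp: carrier_integer_mod_group)
  have "klein_coords \<in> hom perm_group (integer_mod_group 2 \<times>\<times> integer_mod_group 2)"
    unfolding hom_def carrier_DirProd carrier_Z2
    by (auto simp: perm_group_def klein_coords_simps sigma_mult_table)
  moreover have "klein_coords ` carrier perm_group = carrier (integer_mod_group 2 \<times>\<times> integer_mod_group 2)"
    unfolding carrier_DirProd carrier_Z2 by (auto simp: perm_group_def klein_coords_simps)
  moreover have "inj_on klein_coords (carrier perm_group)"
    by (auto simp: perm_group_def klein_coords_simps inj_on_def)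
  ultimately show ?thesis
    by (simp add: iso_iff)
qed

theorem mainTheorem6:
  fixes n :: nat and W :: "'w set" and E :: "'w \<Rightarrow> nat set \<Rightarrow> 'w set set" and V :: "'p \<Rightarrow> 'w set"
  assumes "coalition_model n W E V"
    and "\<forall>w\<in>W. alpha_duality n W E w"
  shows "(\<forall>w\<in>W. \<forall>C f. C \<subseteq> {1..n} \<longrightarrow>
            cat W E V w C (Neg f) = sigma_neg (cat W E V w C f) \<and>
            cat W E V w ({1..n} - C) f = sigma_comp (cat W E V w C f) \<and>
            cat W E V w ({1..n} - C) (Neg f) = sigma_both (cat W E V w C f) \<and>
            cat W E V w C f = id (cat W E V w C f))
       \<and> group perm_group
       \<and> perm_group \<cong> (integer_mod_group 2 \<times>\<times> integer_mod_group 2)"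
proof (intro conjI ballI allI impI)
  fix w C and f :: "'p fm"
  assume "w \<in> W" and C: "C \<subseteq> {1..n}"
  then have duality: "alpha_duality n W E w"
    using assms(2) by blast
  show "cat W E V w C (Neg f) = sigma_neg (cat W E V w C f)"
    by (rule cat_Neg)
  show "cat W E V w ({1..n} - C) f = sigma_comp (cat W E V w C f)"
    using duality C by (rule cat_complement)
  show "cat W E V w ({1..n} - C) (Neg f) = sigma_both (cat W E V w C f)"
    using duality C by (rule cat_complement_Neg)
qed (simp_all add: group_perm_group klein_coords_iso[THEN is_isoI])

end
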